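(* Let $p\in\mathbb{R}$ and let $\gamma$ be a $p$-elastic curve in $\mathbb{S}^2$ whose curvature is a non-constant periodic function of arc length. Then either $p=2$ or $p\in(0,1)$.
   Context: $\mathbb{S}^2$ is the unit sphere in $\mathbb{R}^3$ with the induced metric. For an immersed curve $\gamma$ in $\mathbb{S}^2$ parametrized by arc length $s$, let $T=\gamma'$, let $N$ be the rotation of $T$ by $+\pi/2$ in the tangent plane of $\mathbb{S}^2$, and define the geodesic curvature $\kappa$ by $\nabla_T T=\kappa N$. Curves are smooth (class $\mathcal{C}^4$ suffices). Here $\mathbb{N}$ includes $0$. The $p$-elastic functional is $\mathbf{\Theta}_p(\gamma)=\int_\gamma \kappa^p\,ds$; if $p\in\mathbb{R}\setminus\mathbb{N}$ it is considered only on convex curves ($\kappa>0$ everywhere). A $p$-elastic curve is a curve (convex if $p\notin\mathbb{N}$) whose curvature satisfies $$p\,\frac{d^2}{ds^2}\left(\kappa^{p-1}\right)+(p-1)\kappa^{p+1}+p\,\kappa^{p-1}=0.$$ *)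

theory Defs
  imports "HOL-Analysis.Analysis" "HOL-Analysis.Cross3"
begin

definition sphere_arclength_curve :: "(real \<Rightarrow> real^3) \<Rightarrow> bool" where
  "sphere_arclength_curve \<gamma> \<longleftrightarrow>
     (\<exists>g :: nat \<Rightarrow> real \<Rightarrow> real^3. g 0 = \<gamma> \<and>
        (\<forall>k<4. \<forall>s. (g k has_vector_derivative g (Suc k) s) (at s)) \<and>
        continuous_on UNIV (g 4)) \<and>
     (\<forall>s. norm (\<gamma> s) = 1) \<and>
     (\<forall>s. norm (vector_derivative \<gamma> (at s)) = 1)"

text \<open>Geodesic curvature: T = gamma', N = gamma \<times> T (rotation of T by +pi/2 in the
  tangent plane), kappa = <gamma'', N> = gamma . (T \<times> gamma'').\<close>
definition geod_curv :: "(real \<Rightarrow> real^3) \<Rightarrow> real \<Rightarrow> real" where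
  "geod_curv \<gamma> s =
     \<gamma> s \<bullet> (cross3 (vector_derivative \<gamma> (at s))
              (vector_derivative (\<lambda>t. vector_derivative \<gamma> (at t)) (at s)))"

text \<open>Powers x^(p+a) for a \<in> {-1, 1}: integer powers when p \<in> \<nat>, real powers otherwise
  (then only used for x > 0).\<close>
definition ppow :: "real \<Rightarrow> int \<Rightarrow> real \<Rightarrow> real" where
  "ppow p a x = (if p \<in> \<nat> then x powi (\<lfloor>p\<rfloor> + a) else x powr (p + of_int a))"

definition p_elastic_curve :: "real \<Rightarrow> (real \<Rightarrow> real^3) \<Rightarrow> bool" where
  "p_elastic_curve p \<gamma> \<longleftrightarrow>
     sphere_arclength_curve \<gamma> \<and>
     (p \<notin> \<nat> \<longrightarrow> (\<forall>s. geod_curv \<gamma> s > 0)) \<and>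
     (\<forall>s. p * deriv (deriv (\<lambda>t. ppow p (-1) (geod_curv \<gamma> t))) s
          + (p - 1) * ppow p 1 (geod_curv \<gamma> s)
          + p * ppow p (-1) (geod_curv \<gamma> s) = 0)"

end

theory Submission imports Defs begin

text \<open>Write \<open>\<kappa>\<close> for the geodesic curvature and \<open>f = \<kappa>^(p - 1)\<close>. The elastic equation reads
  \<open>p f'' = - \<kappa>^(p - 1) ((p - 1) \<kappa>^2 + p)\<close>. For \<open>p \<notin> [0, 1]\<close> the right-hand side has a fixed
  sign wherever \<open>\<kappa> \<noteq> 0\<close>, whereas the second derivative of a periodic function vanishes somewhere
  (Rolle twice). Non-integer \<open>p\<close> come with \<open>\<kappa> > 0\<close>, which leaves \<open>0 < p < 1\<close>. For integer \<open>p\<close>: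
  \<open>p = 0\<close> forces \<open>\<kappa> = 0\<close>, \<open>p = 1\<close> admits no solution, and for \<open>p \<ge> 3\<close> the curvature has a zero.
  There the conserved quantity \<open>p^2 f'^2 + (p - 1)^2 \<kappa>^(2p) + p^2 \<kappa>^(2p - 2)\<close> vanishes, so it
  vanishes everywhere and \<open>\<kappa>\<close> is identically zero.\<close>

lemma periodic_second_derivative_has_zero:
  fixes f f' f'' :: "real \<Rightarrow> real"
  assumes f': "\<And>s. (f has_real_derivative f' s) (at s)"
    and f'': "\<And>s. (f' has_real_derivative f'' s) (at s)"
    and L: "L > 0" and per: "\<And>s. f (s + L) = f s"
  shows "\<exists>s. f'' s = 0"
proof -
  have cont_f: "continuous_on A f" and cont_f': "continuous_on A f'" for A
    using DERIV_isCont f' f'' by (blast intro: continuous_at_imp_continuous_on)+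
  have diff_f: "f differentiable (at x)" and diff_f': "f' differentiable (at x)" for x
    using f' f'' real_differentiable_def by blast+
  obtain c where c: "0 < c" "c < L" "DERIV f c :> 0"
    using Rolle[of 0 L f] L per[of 0] cont_f diff_f by auto
  obtain d where d: "L < d" "d < L + L" "DERIV f d :> 0"
    using Rolle[of L "L + L" f] L per[of L] cont_f diff_f by auto
  have "f' c = 0" "f' d = 0"
    using DERIV_unique[OF f' c(3)] DERIV_unique[OF f' d(3)] by simp_all
  then obtain z where "DERIV f' z :> 0"
    using Rolle[of c d f'] c d cont_f' diff_f' by auto
  then show ?thesis using DERIV_unique[OF f''] by blast
qed

lemma power_has_second_derivative:
  fixes k :: "real \<Rightarrow> real" and n :: nat
  assumes k': "\<And>s. (k has_real_derivative k' s) (at s)"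
    and k'': "\<And>s. (k' has_real_derivative k'' s) (at s)"
  shows "((\<lambda>t. k t ^ n) has_real_derivative real n * k s ^ (n - 1) * k' s) (at s)"
    and "((\<lambda>t. real n * k t ^ (n - 1) * k' t) has_real_derivative
           real n * (real (n - 1) * k s ^ (n - 2) * (k' s)\<^sup>2 + k s ^ (n - 1) * k'' s)) (at s)"
proof -
  show "((\<lambda>t. k t ^ n) has_real_derivative real n * k s ^ (n - 1) * k' s) (at s)"
    using DERIV_power[OF k'[of s], of n] by (simp only: One_nat_def mult_ac)
  have "n - 1 - Suc 0 = n - 2" by simp
  then have "((\<lambda>t. k t ^ (n - 1)) has_real_derivative real (n - 1) * (k' s * k s ^ (n - 2))) (at s)"
    using DERIV_power[OF k'[of s], of "n - 1"] by (simp only:)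
  from DERIV_cmult[OF DERIV_mult[OF this k''], of "real n"]
  show "((\<lambda>t. real n * k t ^ (n - 1) * k' t) has_real_derivative
           real n * (real (n - 1) * k s ^ (n - 2) * (k' s)\<^sup>2 + k s ^ (n - 1) * k'' s)) (at s)"
    by (simp only: mult_ac distrib_left power2_eq_square)
qed

lemma powr_has_second_derivative:
  fixes k :: "real \<Rightarrow> real"
  assumes k': "\<And>s. (k has_real_derivative k' s) (at s)"
    and k'': "\<And>s. (k' has_real_derivative k'' s) (at s)"
    and pos: "\<And>s. k s > 0"
  shows "((\<lambda>t. k t powr a) has_real_derivative a * k s powr (a - 1) * k' s) (at s)"
    and "((\<lambda>t. a * k t powr (a - 1) * k' t) has_real_derivative
           a * ((a - 1) * k s powr (a - 2) * (k' s)\<^sup>2 + k s powr (a - 1) * k'' s)) (at s)"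
proof -
  show "((\<lambda>t. k t powr a) has_real_derivative a * k s powr (a - 1) * k' s) (at s)"
    using DERIV_fun_powr[OF k' pos, of a] by simp
  have "((\<lambda>t. k t powr (a - 1)) has_real_derivative (a - 1) * k s powr (a - 2) * k' s) (at s)"
    using DERIV_fun_powr[OF k' pos, of "a - 1"] by simp
  from DERIV_cmult[OF DERIV_mult[OF this k''], of a]
  show "((\<lambda>t. a * k t powr (a - 1) * k' t) has_real_derivative
           a * ((a - 1) * k s powr (a - 2) * (k' s)\<^sup>2 + k s powr (a - 1) * k'' s)) (at s)"
    by (simp add: algebra_simps power2_eq_square)
qed

lemma power_elastic_periodic_has_zero:
  fixes k :: "real \<Rightarrow> real" and n :: nat
  assumes k': "\<And>s. (k has_real_derivative k' s) (at s)"
    and k'': "\<And>s. (k' has_real_derivative k'' s) (at s)"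
    and "0 < n"
    and ode: "\<And>s. real n * deriv (deriv (\<lambda>t. k t ^ (n - 1))) s
                  + real (n - 1) * k s ^ (n + 1) + real n * k s ^ (n - 1) = 0"
    and "L > 0" and per: "\<And>s. k (s + L) = k s"
  shows "\<exists>s. k s = 0"
proof -
  obtain m where n: "n = Suc m" using \<open>0 < n\<close> gr0_implies_Suc by blast
  define f' where "f' s = real m * k s ^ (m - 1) * k' s" for s
  define f'' where "f'' s = real m * (real (m - 1) * k s ^ (m - 2) * (k' s)\<^sup>2 + k s ^ (m - 1) * k'' s)" for s
  have D1: "((\<lambda>t. k t ^ m) has_real_derivative f' s) (at s)"
    and D2: "(f' has_real_derivative f'' s) (at s)" for s
    unfolding f'_def[abs_def] f''_def using power_has_second_derivative[OF k' k''] by blast+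
  have "deriv (deriv (\<lambda>t. k t ^ m)) = f''"
    using DERIV_imp_deriv D1 D2 by (metis ext)
  then have ode': "real n * f'' s + k s ^ m * (real m * (k s)\<^sup>2 + real n) = 0" for s
    using ode[of s] by (simp add: n algebra_simps power2_eq_square)
  obtain s where "f'' s = 0"
    using periodic_second_derivative_has_zero[OF D1 D2 \<open>L > 0\<close>] per by auto
  moreover have "real m * (k s)\<^sup>2 + real n > 0"
    by (simp add: n add_nonneg_pos)
  ultimately have "k s ^ m = 0" using ode'[of s] by simp
  then show ?thesis by auto
qed

lemma power_elastic_vanishing_imp_zero:
  fixes k :: "real \<Rightarrow> real" and n :: nat
  assumes k': "\<And>s. (k has_real_derivative k' s) (at s)"
    and k'': "\<And>s. (k' has_real_derivative k'' s) (at s)"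
    and "3 \<le> n"
    and ode: "\<And>s. real n * deriv (deriv (\<lambda>t. k t ^ (n - 1))) s
                  + real (n - 1) * k s ^ (n + 1) + real n * k s ^ (n - 1) = 0"
    and "k s\<^sub>0 = 0"
  shows "k s = 0"
proof -
  obtain m where n: "n = m + 3" using \<open>3 \<le> n\<close> by (metis add.commute le_Suc_ex)
  define f' where "f' s = real (m + 2) * k s ^ (m + 1) * k' s" for s
  define f'' where "f'' s = real (m + 2) * (real (m + 1) * k s ^ m * (k' s)\<^sup>2 + k s ^ (m + 1) * k'' s)" for s
  have D1: "((\<lambda>t. k t ^ (m + 2)) has_real_derivative f' s) (at s)"
    and D2: "(f' has_real_derivative f'' s) (at s)" for s
    unfolding f'_def[abs_def] f''_def using power_has_second_derivative[OF k' k'', of "m + 2"] by simp_all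
  have "deriv (deriv (\<lambda>t. k t ^ (m + 2))) = f''"
    using DERIV_imp_deriv D1 D2 by (metis ext)
  then have ode': "real (m + 3) * f'' s + real (m + 2) * k s ^ (m + 4) + real (m + 3) * k s ^ (m + 2) = 0" for s
    using ode[of s] by (simp add: n eval_nat_numeral)
  define a where "a t = k t ^ (m + 2)" for t
  define b where "b t = k t ^ (m + 3)" for t
  have Da: "(a has_real_derivative real (m + 2) * k s ^ (m + 1) * k' s) (at s)"
    and Db: "(b has_real_derivative real (m + 3) * k s ^ (m + 2) * k' s) (at s)" for s
    unfolding a_def[abs_def] b_def[abs_def]
    using power_has_second_derivative(1)[OF k' k'', of "m + 2"]
      power_has_second_derivative(1)[OF k' k'', of "m + 3"] by simp_all
  \<comment> \<open>A first integral of the equation: its derivative is \<open>2 n f'\<close> times the left-hand side.\<close>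
  define E where "E s = (real (m + 3) * f' s)\<^sup>2 + (real (m + 2) * b s)\<^sup>2
                        + (real (m + 3) * a s)\<^sup>2" for s
  have E': "(E has_real_derivative 2 * real (m + 3) * f' s *
          (real (m + 3) * f'' s + real (m + 2) * k s ^ (m + 4) + real (m + 3) * k s ^ (m + 2))) (at s)" for s
    unfolding E_def[abs_def]
    apply (rule DERIV_cong, (auto intro!: derivative_eq_intros Da Db D2)[1])
    by (simp add: a_def b_def f'_def power_add power3_eq_cube power4_eq_xxxx) (simp add: algebra_simps)
  have "(E has_real_derivative 0) (at s)" for s
    using E'[of s] unfolding ode'[of s] by simp
  then have "E s = E s\<^sub>0" using DERIV_isconst_all by blast
  also have "E s\<^sub>0 = 0" by (simp add: E_def f'_def a_def b_def \<open>k s\<^sub>0 = 0\<close>)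
  finally have "(real (m + 3) * a s)\<^sup>2 = 0"
    unfolding E_def by (simp add: add_nonneg_eq_0_iff)
  then show "k s = 0" by (auto simp: a_def)
qed

lemma powr_elastic_periodic_imp_unit_interval:
  fixes k :: "real \<Rightarrow> real"
  assumes k': "\<And>s. (k has_real_derivative k' s) (at s)"
    and k'': "\<And>s. (k' has_real_derivative k'' s) (at s)"
    and pos: "\<And>s. k s > 0"
    and ode: "\<And>s. p * deriv (deriv (\<lambda>t. k t powr (p - 1))) s
                  + (p - 1) * k s powr (p + 1) + p * k s powr (p - 1) = 0"
    and "L > 0" and per: "\<And>s. k (s + L) = k s"
  shows "0 \<le> p \<and> p \<le> 1"
proof (rule ccontr)
  assume "\<not> (0 \<le> p \<and> p \<le> 1)"
  define f' where "f' s = (p - 1) * k s powr (p - 1 - 1) * k' s" for s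
  define f'' where "f'' s = (p - 1) * ((p - 1 - 1) * k s powr (p - 1 - 2) * (k' s)\<^sup>2
                                        + k s powr (p - 1 - 1) * k'' s)" for s
  have D1: "((\<lambda>t. k t powr (p - 1)) has_real_derivative f' s) (at s)"
    and D2: "(f' has_real_derivative f'' s) (at s)" for s
    unfolding f'_def[abs_def] f''_def using powr_has_second_derivative[OF k' k'' pos] by blast+
  have "deriv (deriv (\<lambda>t. k t powr (p - 1))) = f''"
    using DERIV_imp_deriv D1 D2 by (metis ext)
  moreover have "k s powr (p + 1) = k s powr (p - 1) * (k s)\<^sup>2" for s
    using powr_add[of "k s" "p - 1" 2] pos[of s] by (simp add: powr_numeral add.commute)
  ultimately have ode': "p * f'' s + k s powr (p - 1) * ((p - 1) * (k s)\<^sup>2 + p) = 0" for s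
    using ode[of s] by (simp add: algebra_simps)
  obtain s where "f'' s = 0"
    using periodic_second_derivative_has_zero[OF D1 D2 \<open>L > 0\<close>] per by auto
  with ode'[of s] pos[of s] have "(p - 1) * (k s)\<^sup>2 + p = 0" by simp
  moreover have "(p - 1) * (k s)\<^sup>2 \<ge> 0 \<longleftrightarrow> p \<ge> 1"
    using pos[of s] by (simp add: zero_le_mult_iff)
  ultimately show False using \<open>\<not> (0 \<le> p \<and> p \<le> 1)\<close> by linarith
qed

lemma has_real_derivative_triple_product:
  fixes a b c :: "real \<Rightarrow> real^3"
  assumes "(a has_vector_derivative a') (at s)" "(b has_vector_derivative b') (at s)"
    "(c has_vector_derivative c') (at s)"
  shows "((\<lambda>t. a t \<bullet> cross3 (b t) (c t)) has_real_derivative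
     a s \<bullet> (cross3 (b s) c' + cross3 b' (c s)) + a' \<bullet> cross3 (b s) (c s)) (at s)"
proof -
  have "bounded_bilinear cross3"
    using bilinear_cross bilinear_conv_bounded_bilinear by blast
  from bounded_bilinear.has_vector_derivative[OF this assms(2,3)]
  have "((\<lambda>t. cross3 (b t) (c t)) has_vector_derivative cross3 (b s) c' + cross3 b' (c s)) (at s)" .
  from bounded_bilinear.has_vector_derivative[OF bounded_bilinear_inner assms(1) this]
  show ?thesis unfolding has_real_derivative_iff_has_vector_derivative .
qed

lemma geod_curv_twice_differentiable:
  assumes "sphere_arclength_curve \<gamma>"
  obtains \<kappa>' \<kappa>'' where "\<And>s. (geod_curv \<gamma> has_real_derivative \<kappa>' s) (at s)"
    and "\<And>s. (\<kappa>' has_real_derivative \<kappa>'' s) (at s)"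
proof -
  obtain g :: "nat \<Rightarrow> real \<Rightarrow> real^3" where g0: "g 0 = \<gamma>"
    and g: "\<And>k s. k < 4 \<Longrightarrow> (g k has_vector_derivative g (Suc k) s) (at s)"
    using assms unfolding sphere_arclength_curve_def by blast
  have g0': "(g 0 has_vector_derivative g 1 s) (at s)"
    and g1': "(g 1 has_vector_derivative g 2 s) (at s)"
    and g2': "(g 2 has_vector_derivative g 3 s) (at s)"
    and g3': "(g 3 has_vector_derivative g 4 s) (at s)" for s
    using g[of 0] g[of 1] g[of 2] g[of 3] by (simp_all add: eval_nat_numeral)
  have "vector_derivative \<gamma> (at t) = g 1 t" "vector_derivative (g 1) (at t) = g 2 t" for t
    using g0' g1' g0 vector_derivative_at by blast+
  then have \<kappa>: "geod_curv \<gamma> = (\<lambda>s. g 0 s \<bullet> cross3 (g 1 s) (g 2 s))"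
    by (simp add: geod_curv_def g0 fun_eq_iff)
  define \<kappa>' where "\<kappa>' s = g 0 s \<bullet> cross3 (g 1 s) (g 3 s)" for s
  have "(geod_curv \<gamma> has_real_derivative \<kappa>' s) (at s)" for s
    using has_real_derivative_triple_product[OF g0' g1' g2', of s]
    by (simp add: \<kappa> \<kappa>'_def dot_cross_self)
  moreover have "(\<kappa>' has_real_derivative
      g 0 s \<bullet> (cross3 (g 1 s) (g 4 s) + cross3 (g 2 s) (g 3 s)) + g 1 s \<bullet> cross3 (g 1 s) (g 3 s)) (at s)" for s
    unfolding \<kappa>'_def[abs_def] by (rule has_real_derivative_triple_product[OF g0' g1' g3'])
  ultimately show ?thesis by (rule that)
qed

lemma ppow_of_nat_plus_one: "ppow (real n) 1 x = x ^ (n + 1)"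
proof -
  have "int n + 1 = int (n + 1)" by simp
  then show ?thesis unfolding ppow_def by (simp only: power_int_of_nat floor_of_nat of_nat_in_Nats if_True)
qed

lemma ppow_of_nat_minus_one: "0 < n \<Longrightarrow> ppow (real n) (-1) x = x ^ (n - 1)"
proof -
  assume "0 < n"
  then have "int n + -1 = int (n - 1)" by simp
  then show ?thesis unfolding ppow_def by (simp only: power_int_of_nat floor_of_nat of_nat_in_Nats if_True)
qed

lemma ppow_not_nat: "p \<notin> \<nat> \<Longrightarrow> ppow p a x = x powr (p + of_int a)"
  by (simp add: ppow_def)

lemma p_elastic_curve_zero_geodesic:
  assumes "p_elastic_curve 0 \<gamma>"
  shows "geod_curv \<gamma> s = 0"
  using assms ppow_of_nat_plus_one[of 0] by (simp add: p_elastic_curve_def)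

lemma not_p_elastic_curve_one: "\<not> p_elastic_curve 1 \<gamma>"
  using ppow_of_nat_minus_one[of 1] by (simp add: p_elastic_curve_def)

lemma p_elastic_curve_nat_periodic_geodesic:
  assumes elastic: "p_elastic_curve (real n) \<gamma>" and "3 \<le> n"
    and "L > 0" and per: "\<And>s. geod_curv \<gamma> (s + L) = geod_curv \<gamma> s"
  shows "geod_curv \<gamma> s = 0"
proof -
  obtain \<kappa>' \<kappa>'' where \<kappa>': "\<And>s. (geod_curv \<gamma> has_real_derivative \<kappa>' s) (at s)"
    and \<kappa>'': "\<And>s. (\<kappa>' has_real_derivative \<kappa>'' s) (at s)"
    using elastic geod_curv_twice_differentiable unfolding p_elastic_curve_def by blast
  have ode: "real n * deriv (deriv (\<lambda>t. geod_curv \<gamma> t ^ (n - 1))) s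
      + real (n - 1) * geod_curv \<gamma> s ^ (n + 1) + real n * geod_curv \<gamma> s ^ (n - 1) = 0" for s
    using elastic \<open>3 \<le> n\<close> by (simp add: p_elastic_curve_def ppow_of_nat_plus_one ppow_of_nat_minus_one)
  obtain s\<^sub>0 where "geod_curv \<gamma> s\<^sub>0 = 0"
    using power_elastic_periodic_has_zero[OF \<kappa>' \<kappa>'' _ ode \<open>L > 0\<close> per] \<open>3 \<le> n\<close> by auto
  then show ?thesis using power_elastic_vanishing_imp_zero[OF \<kappa>' \<kappa>'' \<open>3 \<le> n\<close> ode] by blast
qed

lemma p_elastic_curve_not_nat_periodic_unit_interval:
  assumes elastic: "p_elastic_curve p \<gamma>" and "p \<notin> \<nat>"
    and "L > 0" and per: "\<And>s. geod_curv \<gamma> (s + L) = geod_curv \<gamma> s"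
  shows "0 < p \<and> p < 1"
proof -
  obtain \<kappa>' \<kappa>'' where \<kappa>': "\<And>s. (geod_curv \<gamma> has_real_derivative \<kappa>' s) (at s)"
    and \<kappa>'': "\<And>s. (\<kappa>' has_real_derivative \<kappa>'' s) (at s)"
    using elastic geod_curv_twice_differentiable unfolding p_elastic_curve_def by blast
  have pos: "geod_curv \<gamma> s > 0" for s
    using elastic \<open>p \<notin> \<nat>\<close> by (simp add: p_elastic_curve_def)
  have ode: "p * deriv (deriv (\<lambda>t. geod_curv \<gamma> t powr (p - 1))) s
      + (p - 1) * geod_curv \<gamma> s powr (p + 1) + p * geod_curv \<gamma> s powr (p - 1) = 0" for s
    using elastic \<open>p \<notin> \<nat>\<close> by (simp add: p_elastic_curve_def ppow_not_nat)
  have "p \<noteq> 0" "p \<noteq> 1" using \<open>p \<notin> \<nat>\<close> by auto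
  with powr_elastic_periodic_imp_unit_interval[OF \<kappa>' \<kappa>'' pos ode \<open>L > 0\<close> per] show ?thesis
    by auto
qed

theorem mainTheorem4:
  fixes p :: real and \<gamma> :: "real \<Rightarrow> real^3"
  assumes "p_elastic_curve p \<gamma>"
    and "\<exists>L>0. \<forall>s. geod_curv \<gamma> (s + L) = geod_curv \<gamma> s"
    and "\<exists>s1 s2. geod_curv \<gamma> s1 \<noteq> geod_curv \<gamma> s2"
  shows "p = 2 \<or> (0 < p \<and> p < 1)"
proof (cases "p \<in> \<nat>")
  case True
  then obtain n where p: "p = real n" by (auto elim: Nats_cases)
  obtain L where "L > 0" and per: "\<And>s. geod_curv \<gamma> (s + L) = geod_curv \<gamma> s"
    using assms(2) by blast
  have "n = 2"
  proof (rule ccontr)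
    assume "n \<noteq> 2"
    moreover have "n \<noteq> 1" using assms(1) not_p_elastic_curve_one p by auto
    ultimately have "n = 0 \<or> 3 \<le> n" by linarith
    then have "geod_curv \<gamma> s = 0" for s
      using assms(1) p p_elastic_curve_zero_geodesic p_elastic_curve_nat_periodic_geodesic[OF _ _ \<open>L > 0\<close> per]
      by fastforce
    with assms(3) show False by simp
  qed
  with p show ?thesis by simp
next
  case False
  with assms(1,2) show ?thesis using p_elastic_curve_not_nat_periodic_unit_interval by blast
qed

end
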